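(* Under Assumption 1, for every bounded continuous $f:\mathcal P(\mathbb R^d)\to\mathbb R$ the function $$Pf(\pi,Q)=\int f(\pi')\,P(d\pi'\mid\pi,Q)=\sum_{m=1}^M f\big(\hat\pi(m,\pi,Q)\big)\,\pi(Q^{-1}(m))$$ is continuous on $\mathcal S\times\mathcal Q_c$; i.e., the belief transition kernel is weak-Feller on $\mathcal S\times\mathcal Q_c$.
   Context: Assumption 1: the source is $x_{t+1}=f(x_t,w_t)$ with Borel $f$, $\{w_t\}$ i.i.d. and independent of $x_0$; for each $x$ the law of $f(x,w_0)$ has a density $\phi(\cdot|x)$ which is strictly positive everywhere, bounded by $C$ and $C_1$-Lipschitz, uniformly in $x$. $\mathcal P(\mathbb R^d)$ has the weak topology. $\mathcal S$: probability measures on $\mathbb R^d$ with density bounded by $C$ and $C_1$-Lipschitz. $\mathcal Q_c$: Borel maps $Q:\mathbb R^d\to\{1,\dots,M\}$ with all cells convex, topologized by: fix $P$ with strictly positive density, identify $Q,Q'$ if $PQ=PQ'$, and $Q_n\to Q$ iff $PQ_n\to PQ$ weakly, where $PQ(A\times\{i\})=P(A\cap Q^{-1}(i))$. $P(d\pi'\mid\pi,Q)$ is the law of the next belief $\pi_{t+1}=\hat\pi(q_t,\pi,Q)$ given $\pi_t=\pi$, $Q_t=Q$, where $P(q_t=m\mid\pi,Q)=\pi(Q^{-1}(m))$ and $\hat\pi(m,\pi,Q)$ has density $z\mapsto\pi(Q^{-1}(m))^{-1}\int_{Q^{-1}(m)}\phi(z|x)\pi(dx)$ (terms with $\pi(Q^{-1}(m))=0$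 contribute zero). *)

theory Defs
  imports "HOL-Probability.Probability"
begin

definition weak_conv_seq :: "(nat \<Rightarrow> 'b::topological_space measure) \<Rightarrow> 'b measure \<Rightarrow> bool" where
  "weak_conv_seq \<mu>s \<mu> \<longleftrightarrow>
     (\<forall>g :: 'b \<Rightarrow> real. continuous_on UNIV g \<and> bounded (range g) \<longrightarrow>
        (\<lambda>n. \<integral>x. g x \<partial>(\<mu>s n)) \<longlonglongrightarrow> (\<integral>x. g x \<partial>\<mu>))"

definition prob_borel :: "'a::topological_space measure \<Rightarrow> bool" where
  "prob_borel \<mu> \<longleftrightarrow> prob_space \<mu> \<and> sets \<mu> = sets borel"

definition in_S :: "real \<Rightarrow> real \<Rightarrow> 'a::euclidean_space measure \<Rightarrow> bool" where
  "in_S C C1 \<pi> \<longleftrightarrow> prob_space \<pi> \<and>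
     (\<exists>g. g \<in> borel_measurable borel \<and> (\<forall>x. 0 \<le> g x \<and> g x \<le> C) \<and>
          C1-lipschitz_on UNIV g \<and> \<pi> = density lborel (\<lambda>x. ennreal (g x)))"

definition in_Qc :: "nat \<Rightarrow> ('a::euclidean_space \<Rightarrow> nat) \<Rightarrow> bool" where
  "in_Qc M Q \<longleftrightarrow> Q \<in> borel_measurable borel \<and> (\<forall>x. Q x \<in> {1..M}) \<and>
     (\<forall>i. convex (Q -` {i}))"

text \<open>The joint measure PQ on R^d x nat: PQ(A x {i}) = P(A \<inter> Q^{-1}(i)).\<close>
definition joint_PQ :: "'a::euclidean_space measure \<Rightarrow> ('a \<Rightarrow> nat) \<Rightarrow> ('a \<times> nat) measure" where
  "joint_PQ P Q = distr P borel (\<lambda>x. (x, Q x))"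

text \<open>Belief update: density z \<mapsto> \<pi>(Q^{-1} m)^{-1} \<integral>_{Q^{-1} m} \<phi>(z|x) \<pi>(dx);
  here \<open>\<phi> x z\<close> stands for \<phi>(z|x).\<close>
definition belief_update ::
  "('a::euclidean_space \<Rightarrow> 'a \<Rightarrow> real) \<Rightarrow> nat \<Rightarrow> 'a measure \<Rightarrow> ('a \<Rightarrow> nat) \<Rightarrow> 'a measure" where
  "belief_update \<phi> m \<pi> Q =
     density lborel (\<lambda>z. ennreal (inverse (measure \<pi> (Q -` {m})) *
                                  (\<integral>x\<in>Q -` {m}. \<phi> x z \<partial>\<pi>)))"

definition Pf ::
  "('a::euclidean_space measure \<Rightarrow> real) \<Rightarrow> ('a \<Rightarrow> 'a \<Rightarrow> real) \<Rightarrow> nat \<Rightarrow> 'a measure \<Rightarrow> ('a \<Rightarrow> nat) \<Rightarrow> real" where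
  "Pf f \<phi> M \<pi> Q =
     (\<Sum>m\<in>{1..M}. if measure \<pi> (Q -` {m}) = 0 then 0
                   else f (belief_update \<phi> m \<pi> Q) * measure \<pi> (Q -` {m}))"

end

theory Submission
  imports Defs
begin

text \<open>
  Both sides are finite sums over the cells, so it suffices to show convergence of the term of a
  fixed cell; write \<open>A\<^sub>n = Q\<^sub>n\<^sup>-\<^sup>1(m)\<close>, \<open>A = Q\<^sup>-\<^sup>1(m)\<close> and \<open>g\<^sub>n\<close>, \<open>g\<close> for the densities of
  \<open>\<pi>\<^sub>n\<close>, \<open>\<pi>\<close>.  As the densities are uniformly bounded and uniformly Lipschitz, testing
  \<open>\<pi>\<^sub>n \<rightarrow> \<pi>\<close> against narrow tent functions gives \<open>g\<^sub>n \<rightarrow> g\<close> pointwise, hence in \<open>L\<^sup>1\<close> by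
  Scheffe's lemma.  Testing \<open>PQ\<^sub>n \<rightarrow> PQ\<close> against \<open>u(x) 1{i = m}\<close> with continuous \<open>u\<close>, and
  using that the frontier of the convex cell \<open>A\<close> is Lebesgue-null, so that \<open>1\<^sub>A\<close> is approximated
  from inside by continuous cut-offs, gives \<open>\<integral> p |1\<^sub>A\<^sub>n - 1\<^sub>A| \<rightarrow> 0\<close>; since \<open>p > 0\<close> the same
  holds with the weight \<open>g\<close>.  Hence the cell masses \<open>\<pi>\<^sub>n(A\<^sub>n)\<close> converge, and so do the
  unnormalised posterior densities \<open>z \<mapsto> \<integral>\<^sub>A\<^sub>n g\<^sub>n(x) \<phi>(z|x) dx\<close>, pointwise in \<open>z\<close>.  If
  \<open>\<pi>(A) > 0\<close> the normalised posteriors then converge in \<open>L\<^sup>1\<close> (Scheffe again), hence weakly,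
  and continuity of \<open>f\<close> concludes; if \<open>\<pi>(A) = 0\<close> the term is at most \<open>sup |f| \<pi>\<^sub>n(A\<^sub>n) \<rightarrow> 0\<close>.
\<close>

lemma tendsto_zero_by_approximation:
  fixes x :: "nat \<Rightarrow> real" and y :: "nat \<Rightarrow> nat \<Rightarrow> real"
  assumes "\<And>n. 0 \<le> x n" and "\<And>k n. x n \<le> y k n"
    and "\<And>k. (\<lambda>n. y k n) \<longlonglongrightarrow> c k" and "c \<longlonglongrightarrow> 0"
  shows "x \<longlonglongrightarrow> 0"
proof (rule LIMSEQ_I)
  fix e :: real assume e: "0 < e"
  obtain k where k: "\<bar>c k\<bar> < e/2"
    using LIMSEQ_D[OF assms(4), of "e/2"] e by auto
  obtain n0 where n0: "\<And>n. n \<ge> n0 \<Longrightarrow> \<bar>y k n - c k\<bar> < e/2"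
    using LIMSEQ_D[OF assms(3)[of k], of "e/2"] e by auto
  have "norm (x n - 0) < e" if "n \<ge> n0" for n
    using k n0[OF that] assms(1)[of n] assms(2)[of n k] by simp (smt (verit))
  then show "\<exists>no. \<forall>n\<ge>no. norm (x n - 0) < e" by blast
qed

lemma integrable_mult_bounded:
  fixes f h :: "'a \<Rightarrow> real"
  assumes "integrable M f" and "h \<in> borel_measurable M" and "\<And>x. \<bar>h x\<bar> \<le> K"
  shows "integrable M (\<lambda>x. f x * h x)"
proof (rule Bochner_Integration.integrable_bound[where f="\<lambda>x. K * f x"])
  show "AE x in M. norm (f x * h x) \<le> norm (K * f x)"
  proof (intro AE_I2)
    fix x
    have "\<bar>f x\<bar> * \<bar>h x\<bar> \<le> \<bar>f x\<bar> * \<bar>K\<bar>"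
      using assms(3)[of x] by (intro mult_left_mono) auto
    then show "norm (f x * h x) \<le> norm (K * f x)" by (simp add: abs_mult mult.commute)
  qed
qed (use assms in auto)

lemma L1_tendsto_of_pointwise_tendsto_densities:
  fixes gs :: "nat \<Rightarrow> 'a \<Rightarrow> real"
  assumes gs: "\<And>n. integrable M (gs n)" "\<And>n x. 0 \<le> gs n x"
    and g: "integrable M g" "\<And>x. 0 \<le> g x"
    and mass: "\<And>n. integral\<^sup>L M (gs n) = integral\<^sup>L M g"
    and lim: "\<And>x. (\<lambda>n. gs n x) \<longlonglongrightarrow> g x"
  shows "(\<lambda>n. \<integral>x. \<bar>gs n x - g x\<bar> \<partial>M) \<longlonglongrightarrow> 0"
proof -
  have "(\<integral>\<^sup>+x. norm (gs n x) \<partial>M) = (\<integral>\<^sup>+x. norm (g x) \<partial>M)" for n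
    using gs g mass[of n] by (simp add: nn_integral_eq_integral)
  then have "(\<lambda>n. \<integral>\<^sup>+x. norm (gs n x - g x) \<partial>M) \<longlonglongrightarrow> 0"
    by (intro Scheffe_lemma2) (use gs g lim in auto)
  then have "(\<lambda>n. enn2real (\<integral>\<^sup>+x. ennreal \<bar>gs n x - g x\<bar> \<partial>M)) \<longlonglongrightarrow> 0"
    by (intro tendsto_enn2real) auto
  moreover have "(\<integral>x. \<bar>gs n x - g x\<bar> \<partial>M) = enn2real (\<integral>\<^sup>+x. ennreal \<bar>gs n x - g x\<bar> \<partial>M)" for n
    using gs g by (intro integral_eq_nn_integral) auto
  ultimately show ?thesis by simp
qed

lemma integral_mult_bounded_tendsto_of_L1:
  fixes e :: "nat \<Rightarrow> 'a \<Rightarrow> real" and h :: "'a \<Rightarrow> real"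
  assumes e: "\<And>n. integrable M (e n)" and e0: "integrable M e0"
    and h: "h \<in> borel_measurable M" "\<And>x. \<bar>h x\<bar> \<le> K"
    and L1: "(\<lambda>n. \<integral>x. \<bar>e n x - e0 x\<bar> \<partial>M) \<longlonglongrightarrow> 0"
  shows "(\<lambda>n. \<integral>x. e n x * h x \<partial>M) \<longlonglongrightarrow> (\<integral>x. e0 x * h x \<partial>M)"
proof -
  have bound: "\<bar>(\<integral>x. e n x * h x \<partial>M) - (\<integral>x. e0 x * h x \<partial>M)\<bar> \<le> K * (\<integral>x. \<bar>e n x - e0 x\<bar> \<partial>M)" for n
  proof -
    have "(\<integral>x. e n x * h x \<partial>M) - (\<integral>x. e0 x * h x \<partial>M) = (\<integral>x. e n x * h x - e0 x * h x \<partial>M)"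
      using integrable_mult_bounded[OF e h] integrable_mult_bounded[OF e0 h] by simp
    also have "\<dots> = (\<integral>x. (e n x - e0 x) * h x \<partial>M)"
      by (simp add: left_diff_distrib)
    also have "\<bar>\<dots>\<bar> \<le> (\<integral>x. \<bar>(e n x - e0 x) * h x\<bar> \<partial>M)"
      by (rule integral_abs_bound)
    also have "\<dots> \<le> (\<integral>x. K * \<bar>e n x - e0 x\<bar> \<partial>M)"
    proof (rule integral_mono)
      show "integrable M (\<lambda>x. \<bar>(e n x - e0 x) * h x\<bar>)"
        using e e0 h by (intro integrable_abs integrable_mult_bounded) auto
      show "integrable M (\<lambda>x. K * \<bar>e n x - e0 x\<bar>)"
        using e e0 by auto
      show "\<bar>(e n x - e0 x) * h x\<bar> \<le> K * \<bar>e n x - e0 x\<bar>" for x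
        using h(2)[of x] by (simp add: abs_mult mult.commute[of K] mult_left_mono)
    qed
    also have "\<dots> = K * (\<integral>x. \<bar>e n x - e0 x\<bar> \<partial>M)"
      by simp
    finally show ?thesis .
  qed
  have "(\<lambda>n. K * (\<integral>x. \<bar>e n x - e0 x\<bar> \<partial>M)) \<longlonglongrightarrow> 0"
    using tendsto_mult_left[OF L1, of K] by simp
  then have "(\<lambda>n. (\<integral>x. e n x * h x \<partial>M) - (\<integral>x. e0 x * h x \<partial>M)) \<longlonglongrightarrow> 0"
    by (rule Lim_null_comparison[rotated]) (use bound in simp)
  then show ?thesis
    by (simp add: Lim_null[symmetric])
qed

section \<open>Tent functions and pointwise convergence of Lipschitz densities\<close>

definition tent :: "'a::euclidean_space \<Rightarrow> real \<Rightarrow> 'a \<Rightarrow> real" where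
  "tent z r y = max 0 (r - dist y z)"

lemma continuous_on_tent: "continuous_on UNIV (tent z r)"
  unfolding tent_def by (intro continuous_intros)

lemma borel_measurable_tent [measurable]: "tent z r \<in> borel_measurable borel"
  using continuous_on_tent borel_measurable_continuous_onI by blast

lemma tent_nonneg: "0 \<le> tent z r y"
  by (simp add: tent_def)

lemma tent_eq_0: "r \<le> dist y z \<Longrightarrow> tent z r y = 0"
  by (simp add: tent_def)

lemma tent_le_indicator_cball: "tent z r y \<le> max 0 r * indicator (cball z r) y"
  by (auto simp: tent_def indicator_def dist_commute split: split_max)
     (metis order_trans zero_le_dist)

lemma abs_tent_le: "\<bar>tent z r y\<bar> \<le> max 0 r"
  unfolding tent_def abs_le_iff max_def by (smt (verit) zero_le_dist)

lemma integrable_tent: "integrable lborel (tent z r)"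
proof (rule Bochner_Integration.integrable_bound[where f="\<lambda>y. max 0 r * indicator (cball z r) y"])
  show "integrable lborel (\<lambda>y. max 0 r * indicator (cball z r) y)"
    using emeasure_bounded_finite[OF bounded_cball, of z r]
    by (intro integrable_mult_right integrable_real_indicator) auto
  show "AE y in lborel. norm (tent z r y) \<le> norm (max 0 r * indicator (cball z r) y)"
    by (intro AE_I2) (simp add: abs_of_nonneg tent_nonneg tent_le_indicator_cball)
qed simp

lemma integral_tent_pos:
  assumes "r > 0"
  shows "0 < (\<integral>y. tent z r y \<partial>lborel)"
proof -
  have "0 < (\<integral>y. (r/2) * indicator (ball z (r/2)) y \<partial>lborel)"
    using assms content_ball_pos[of "r/2" z] by simp
  also have "\<dots> \<le> (\<integral>y. tent z r y \<partial>lborel)"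
  proof (rule integral_mono)
    show "integrable lborel (\<lambda>y. (r/2) * indicator (ball z (r/2)) y)"
      using emeasure_bounded_finite[OF bounded_ball, of z "r/2"]
      by (intro integrable_mult_right integrable_real_indicator) auto
  qed (use assms integrable_tent[of z r, unfolded tent_def] in \<open>auto simp: tent_def indicator_def dist_commute\<close>)
  finally show ?thesis .
qed

lemma integral_tent_lipschitz:
  fixes g :: "'a::euclidean_space \<Rightarrow> real"
  assumes g: "g \<in> borel_measurable borel" "\<And>y. \<bar>g y\<bar> \<le> K" "L-lipschitz_on UNIV g"
    and r: "r > 0"
  shows "\<bar>(\<integral>y. g y * tent z r y \<partial>lborel) - g z * (\<integral>y. tent z r y \<partial>lborel)\<bar>
           \<le> L * r * (\<integral>y. tent z r y \<partial>lborel)"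
proof -
  have int: "integrable lborel (\<lambda>y. tent z r y * g y)"
    using g by (intro integrable_mult_bounded[OF integrable_tent]) auto
  have "(\<integral>y. g y * tent z r y \<partial>lborel) - g z * (\<integral>y. tent z r y \<partial>lborel)
      = (\<integral>y. (g y - g z) * tent z r y \<partial>lborel)"
    using int integrable_tent[of z r] by (simp add: algebra_simps)
  also have "\<bar>\<dots>\<bar> \<le> (\<integral>y. \<bar>(g y - g z) * tent z r y\<bar> \<partial>lborel)"
    by (rule integral_abs_bound)
  also have "\<dots> \<le> (\<integral>y. L * r * tent z r y \<partial>lborel)"
  proof (rule integral_mono)
    show "integrable lborel (\<lambda>y. \<bar>(g y - g z) * tent z r y\<bar>)"
      using int integrable_tent[of z r] by (intro integrable_abs) (simp add: algebra_simps)
    show "\<bar>(g y - g z) * tent z r y\<bar> \<le> L * r * tent z r y" for y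
    proof (cases "dist y z < r")
      case True
      have "\<bar>g y - g z\<bar> \<le> L * dist y z"
        using g(3) by (simp add: lipschitz_on_def dist_real_def)
      also have "\<dots> \<le> L * r"
        using True lipschitz_on_nonneg[OF g(3)] by (intro mult_left_mono) auto
      finally show ?thesis
        using tent_nonneg[of z r y] by (simp add: abs_mult mult_right_mono)
    next
      case False
      then show ?thesis by (simp add: tent_eq_0)
    qed
  qed (simp add: integrable_tent)
  also have "\<dots> = L * r * (\<integral>y. tent z r y \<partial>lborel)"
    by simp
  finally show ?thesis .
qed

lemma tent_average_tendsto:
  fixes g :: "'a::euclidean_space \<Rightarrow> real"
  assumes g: "g \<in> borel_measurable borel" "\<And>y. \<bar>g y\<bar> \<le> K" "L-lipschitz_on UNIV g"
  shows "(\<lambda>k. (\<integral>y. g y * tent z (inverse (Suc k)) y \<partial>lborel) / (\<integral>y. tent z (inverse (Suc k)) y \<partial>lborel))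
           \<longlonglongrightarrow> g z"
proof -
  have bound: "\<bar>(\<integral>y. g y * tent z (inverse (Suc k)) y \<partial>lborel) / (\<integral>y. tent z (inverse (Suc k)) y \<partial>lborel) - g z\<bar>
      \<le> L * inverse (Suc k)" for k
  proof -
    define I where "I = (\<integral>y. tent z (inverse (Suc k)) y \<partial>lborel)"
    have I: "I > 0"
      unfolding I_def by (rule integral_tent_pos) simp
    have approx: "\<bar>(\<integral>y. g y * tent z (inverse (Suc k)) y \<partial>lborel) - g z * I\<bar> \<le> L * inverse (Suc k) * I"
      unfolding I_def using g by (intro integral_tent_lipschitz) auto
    have "(\<integral>y. g y * tent z (inverse (Suc k)) y \<partial>lborel) / I - g z
        = ((\<integral>y. g y * tent z (inverse (Suc k)) y \<partial>lborel) - g z * I) / I"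
      using I by (simp add: field_simps)
    then have "\<bar>(\<integral>y. g y * tent z (inverse (Suc k)) y \<partial>lborel) / I - g z\<bar> \<le> L * inverse (Suc k)"
      using approx I by (simp add: abs_divide divide_le_eq)
    then show ?thesis
      unfolding I_def .
  qed
  have "(\<lambda>k. L * inverse (real (Suc k))) \<longlonglongrightarrow> 0"
    by (intro tendsto_mult_right_zero LIMSEQ_inverse_real_of_nat)
  then have "(\<lambda>k. (\<integral>y. g y * tent z (inverse (Suc k)) y \<partial>lborel) / (\<integral>y. tent z (inverse (Suc k)) y \<partial>lborel) - g z)
      \<longlonglongrightarrow> 0"
    by (rule Lim_null_comparison[rotated]) (use bound in simp)
  then show ?thesis
    by (simp add: Lim_null[symmetric])
qed

lemma weak_conv_lipschitz_densities_imp_pointwise: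
  fixes gs :: "nat \<Rightarrow> 'a::euclidean_space \<Rightarrow> real" and g :: "'a \<Rightarrow> real"
  assumes gs: "\<And>n. gs n \<in> borel_measurable borel" "\<And>n y. 0 \<le> gs n y \<and> gs n y \<le> K"
      "\<And>n. L-lipschitz_on UNIV (gs n)"
    and g: "g \<in> borel_measurable borel" "\<And>y. 0 \<le> g y \<and> g y \<le> K" "L-lipschitz_on UNIV g"
    and conv: "weak_conv_seq (\<lambda>n. density lborel (\<lambda>x. ennreal (gs n x)))
                 (density lborel (\<lambda>x. ennreal (g x)))"
  shows "(\<lambda>n. gs n z) \<longlonglongrightarrow> g z"
proof -
  define r where "r k = inverse (real (Suc k))" for k
  define I where "I k = (\<integral>y. tent z (r k) y \<partial>lborel)" for k
  define D where "D k n = \<bar>(\<integral>y. gs n y * tent z (r k) y \<partial>lborel) - (\<integral>y. g y * tent z (r k) y \<partial>lborel)\<bar>" for k n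
  have I: "I k > 0" for k
    unfolding I_def r_def by (rule integral_tent_pos) simp
  have D_lim: "(\<lambda>n. D k n) \<longlonglongrightarrow> 0" for k
  proof -
    have "(\<lambda>n. \<integral>y. tent z (r k) y \<partial>density lborel (\<lambda>x. ennreal (gs n x)))
        \<longlonglongrightarrow> (\<integral>y. tent z (r k) y \<partial>density lborel (\<lambda>x. ennreal (g x)))"
      using conv continuous_on_tent abs_tent_le unfolding weak_conv_seq_def bounded_real by blast
    then have "(\<lambda>n. (\<integral>y. gs n y * tent z (r k) y \<partial>lborel) - (\<integral>y. g y * tent z (r k) y \<partial>lborel)) \<longlonglongrightarrow> 0"
      using gs g by (simp add: integral_density Lim_null[symmetric])
    then show ?thesis
      unfolding D_def by (rule tendsto_rabs_zero)
  qed
  have bound: "\<bar>gs n z - g z\<bar> \<le> 2 * L * r k + D k n / I k" for k n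
  proof -
    have gs_avg: "\<bar>(\<integral>y. gs n y * tent z (r k) y \<partial>lborel) - gs n z * I k\<bar> \<le> L * r k * I k"
      unfolding I_def using gs by (intro integral_tent_lipschitz[where K=K]) (auto simp: r_def)
    have g_avg: "\<bar>(\<integral>y. g y * tent z (r k) y \<partial>lborel) - g z * I k\<bar> \<le> L * r k * I k"
      unfolding I_def using g by (intro integral_tent_lipschitz[where K=K]) (auto simp: r_def)
    have "\<bar>gs n z - g z\<bar> * I k = \<bar>gs n z * I k - g z * I k\<bar>"
      using I[of k] by (simp add: abs_mult_pos left_diff_distrib[symmetric])
    also have "\<dots> \<le> 2 * L * r k * I k + D k n"
      unfolding D_def using gs_avg g_avg by linarith
    also have "\<dots> = (2 * L * r k + D k n / I k) * I k"
      using I[of k] by (simp add: field_simps)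
    finally show ?thesis
      using I[of k] by simp
  qed
  have y_lim: "(\<lambda>n. 2 * L * r k + D k n / I k) \<longlonglongrightarrow> 2 * L * r k" for k
    using tendsto_add[OF tendsto_const tendsto_divide_zero[OF D_lim, where c="I k"]] by simp
  have c_lim: "(\<lambda>k. 2 * L * r k) \<longlonglongrightarrow> 0"
    unfolding r_def by (intro tendsto_mult_right_zero LIMSEQ_inverse_real_of_nat)
  have "(\<lambda>n. \<bar>gs n z - g z\<bar>) \<longlonglongrightarrow> 0"
    by (rule tendsto_zero_by_approximation[OF _ bound y_lim c_lim]) simp
  then show ?thesis
    by (simp add: tendsto_rabs_zero_iff Lim_null[symmetric])
qed

section \<open>Measures with a Lebesgue density\<close>

lemma nn_integral_eq_1_of_prob_space_density:
  fixes d :: "'a::euclidean_space \<Rightarrow> real"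
  assumes "d \<in> borel_measurable borel" and "prob_space (density lborel (\<lambda>x. ennreal (d x)))"
  shows "(\<integral>\<^sup>+x. ennreal (d x) \<partial>lborel) = 1"
proof -
  have "emeasure (density lborel (\<lambda>x. ennreal (d x))) UNIV = (\<integral>\<^sup>+x. ennreal (d x) * indicator UNIV x \<partial>lborel)"
    using assms(1) by (intro emeasure_density) auto
  then show ?thesis
    using prob_space.emeasure_space_1[OF assms(2)] by simp
qed

lemma prob_borel_density_of_nn_integral_eq_1:
  fixes d :: "'a::euclidean_space \<Rightarrow> real"
  assumes "d \<in> borel_measurable borel" and "(\<integral>\<^sup>+x. ennreal (d x) \<partial>lborel) = 1"
  shows "prob_borel (density lborel (\<lambda>x. ennreal (d x)))"
proof -
  have "emeasure (density lborel (\<lambda>x. ennreal (d x))) UNIV = (\<integral>\<^sup>+x. ennreal (d x) * indicator UNIV x \<partial>lborel)"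
    using assms(1) by (intro emeasure_density) auto
  then show ?thesis
    using assms(2) unfolding prob_borel_def by (auto intro!: prob_spaceI)
qed

lemma integrable_of_nn_integral_eq_1:
  fixes d :: "'a \<Rightarrow> real"
  assumes "d \<in> borel_measurable M" and "\<And>x. 0 \<le> d x" and "(\<integral>\<^sup>+x. ennreal (d x) \<partial>M) = 1"
  shows "integrable M d" and "integral\<^sup>L M d = 1"
proof -
  show int: "integrable M d"
    using assms by (intro integrableI_nonneg) auto
  have "(\<integral>\<^sup>+x. ennreal (d x) \<partial>M) = ennreal (integral\<^sup>L M d)"
    using int assms(2) by (intro nn_integral_eq_integral) auto
  then show "integral\<^sup>L M d = 1"
    using assms(2,3) by (simp add: integral_nonneg)
qed

lemma integrable_of_prob_space_density:
  fixes d :: "'a::euclidean_space \<Rightarrow> real"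
  assumes "d \<in> borel_measurable borel" and "\<And>x. 0 \<le> d x"
    and "prob_space (density lborel (\<lambda>x. ennreal (d x)))"
  shows "integrable lborel d" and "integral\<^sup>L lborel d = 1"
  using integrable_of_nn_integral_eq_1[of d lborel]
    nn_integral_eq_1_of_prob_space_density[OF assms(1,3)] assms(1,2) by auto

lemma measure_density_eq_integral:
  fixes d :: "'a::euclidean_space \<Rightarrow> real"
  assumes "d \<in> borel_measurable borel" and "\<And>x. 0 \<le> d x" and "integrable lborel d"
    and "B \<in> sets borel"
  shows "measure (density lborel (\<lambda>x. ennreal (d x))) B = (\<integral>x. d x * indicator B x \<partial>lborel)"
proof -
  have int: "integrable lborel (\<lambda>x. d x * indicator B x)"
    using assms(3,4) by (simp add: integrable_real_mult_indicator)
  have "emeasure (density lborel (\<lambda>x. ennreal (d x))) B = (\<integral>\<^sup>+x. ennreal (d x) * indicator B x \<partial>lborel)"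
    using assms(1,4) by (intro emeasure_density) auto
  also have "\<dots> = (\<integral>\<^sup>+x. ennreal (d x * indicator B x) \<partial>lborel)"
    by (intro nn_integral_cong) (auto simp: indicator_def)
  also have "\<dots> = ennreal (\<integral>x. d x * indicator B x \<partial>lborel)"
    using int assms(2) by (intro nn_integral_eq_integral) (auto simp: indicator_def)
  finally show ?thesis
    unfolding measure_def using assms(2) by (simp add: integral_nonneg)
qed

lemma weak_conv_seq_density_of_L1:
  fixes e :: "nat \<Rightarrow> 'a::euclidean_space \<Rightarrow> real"
  assumes e: "\<And>n. integrable lborel (e n)" "\<And>n x. 0 \<le> e n x"
    and e0: "integrable lborel e0" "\<And>x. 0 \<le> e0 x"
    and L1: "(\<lambda>n. \<integral>x. \<bar>e n x - e0 x\<bar> \<partial>lborel) \<longlonglongrightarrow> 0"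
  shows "weak_conv_seq (\<lambda>n. density lborel (\<lambda>x. ennreal (e n x))) (density lborel (\<lambda>x. ennreal (e0 x)))"
  unfolding weak_conv_seq_def
proof (intro allI impI)
  fix u :: "'a \<Rightarrow> real"
  assume u: "continuous_on UNIV u \<and> bounded (range u)"
  then obtain K where K: "\<And>x. \<bar>u x\<bar> \<le> K"
    unfolding bounded_real by auto
  have [measurable]: "u \<in> borel_measurable borel"
    using u borel_measurable_continuous_onI by blast
  have "(\<lambda>n. \<integral>x. e n x * u x \<partial>lborel) \<longlonglongrightarrow> (\<integral>x. e0 x * u x \<partial>lborel)"
    using e e0 K L1 by (intro integral_mult_bounded_tendsto_of_L1) auto
  then show "(\<lambda>n. \<integral>x. u x \<partial>density lborel (\<lambda>x. ennreal (e n x)))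
      \<longlonglongrightarrow> (\<integral>x. u x \<partial>density lborel (\<lambda>x. ennreal (e0 x)))"
    using e e0 by (simp add: integral_density)
qed

lemma nn_integral_normalized_eq_1:
  fixes k :: "'a \<Rightarrow> real"
  assumes "k \<in> borel_measurable M" and "\<And>z. 0 \<le> k z"
    and "(\<integral>\<^sup>+z. ennreal (k z) \<partial>M) = ennreal a" and "0 < a"
  shows "(\<integral>\<^sup>+z. ennreal (inverse a * k z) \<partial>M) = 1"
proof -
  have "(\<integral>\<^sup>+z. ennreal (inverse a * k z) \<partial>M) = ennreal (inverse a) * (\<integral>\<^sup>+z. ennreal (k z) \<partial>M)"
    using assms by (simp add: ennreal_mult nn_integral_cmult)
  then show ?thesis
    using assms(3,4) by (simp flip: ennreal_mult)
qed

lemma weak_conv_seq_density_of_pointwise: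
  fixes e :: "nat \<Rightarrow> 'a::euclidean_space \<Rightarrow> real"
  assumes e: "\<And>n. e n \<in> borel_measurable borel" "\<And>n z. 0 \<le> e n z"
      "\<And>n. (\<integral>\<^sup>+z. ennreal (e n z) \<partial>lborel) = 1"
    and e0: "e0 \<in> borel_measurable borel" "\<And>z. 0 \<le> e0 z" "(\<integral>\<^sup>+z. ennreal (e0 z) \<partial>lborel) = 1"
    and lim: "\<And>z. (\<lambda>n. e n z) \<longlonglongrightarrow> e0 z"
  shows "weak_conv_seq (\<lambda>n. density lborel (\<lambda>z. ennreal (e n z))) (density lborel (\<lambda>z. ennreal (e0 z)))"
proof -
  have e_int: "integrable lborel (e n)" "integral\<^sup>L lborel (e n) = 1" for n
    using integrable_of_nn_integral_eq_1[of "e n" lborel] e by auto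
  have e0_int: "integrable lborel e0" "integral\<^sup>L lborel e0 = 1"
    using integrable_of_nn_integral_eq_1[of e0 lborel] e0 by auto
  have "(\<lambda>n. \<integral>z. \<bar>e n z - e0 z\<bar> \<partial>lborel) \<longlonglongrightarrow> 0"
    by (rule L1_tendsto_of_pointwise_tendsto_densities[OF e_int(1) e(2) e0_int(1) e0(2) _ lim])
       (simp add: e_int(2) e0_int(2))
  then show ?thesis
    by (rule weak_conv_seq_density_of_L1[OF e_int(1) e(2) e0_int(1) e0(2)])
qed

section \<open>Convergence of cells\<close>

text \<open>The case \<open>U = UNIV\<close> is separate because \<open>infdist x {} = 0\<close>.\<close>

definition inner_cutoff :: "'a::metric_space set \<Rightarrow> nat \<Rightarrow> 'a \<Rightarrow> real" where
  "inner_cutoff U k x = (if U = UNIV then 1 else min 1 (real k * infdist x (- U)))"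

lemma continuous_on_inner_cutoff: "continuous_on UNIV (inner_cutoff U k)"
  unfolding inner_cutoff_def by (cases "U = UNIV") (auto intro!: continuous_intros)

lemma borel_measurable_inner_cutoff [measurable]: "inner_cutoff U k \<in> borel_measurable borel"
  using continuous_on_inner_cutoff borel_measurable_continuous_onI by blast

lemma inner_cutoff_nonneg: "0 \<le> inner_cutoff U k x"
  and inner_cutoff_le_1: "inner_cutoff U k x \<le> 1"
  unfolding inner_cutoff_def by (auto simp: infdist_nonneg)

lemma inner_cutoff_eq_0: "open U \<Longrightarrow> x \<notin> U \<Longrightarrow> inner_cutoff U k x = 0"
  unfolding inner_cutoff_def by (auto simp: infdist_zero)

lemma tendsto_inner_cutoff:
  assumes "open U" and "x \<in> U"
  shows "(\<lambda>k. inner_cutoff U k x) \<longlonglongrightarrow> 1"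
proof (cases "U = UNIV")
  case True
  then show ?thesis by (simp add: inner_cutoff_def)
next
  case False
  have "infdist x (- U) \<noteq> 0"
    using in_closed_iff_infdist_zero[of "- U" x] assms False by auto
  then have d: "infdist x (- U) > 0"
    using infdist_nonneg[of x "- U"] by linarith
  obtain n :: nat where n: "1 / infdist x (- U) < real n"
    using reals_Archimedean2 by blast
  have "inner_cutoff U k x = 1" if "n \<le> k" for k
  proof -
    have "1 / infdist x (- U) < real k" using n that by linarith
    then have "1 < real k * infdist x (- U)" using d by (simp add: field_simps)
    then show ?thesis using False by (simp add: inner_cutoff_def)
  qed
  then have "\<forall>\<^sub>F k in sequentially. inner_cutoff U k x = 1"
    unfolding eventually_sequentially by auto
  then show ?thesis
    by (rule tendsto_eventually)
qed

lemma AE_not_in_frontier_convex: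
  fixes A :: "'a::euclidean_space set"
  assumes "convex A"
  shows "AE x in lborel. x \<notin> frontier A"
proof -
  have "frontier A \<in> null_sets lebesgue"
    using negligible_convex_frontier[OF assms] negligible_iff_null_sets by blast
  moreover have "frontier A \<in> sets lborel"
    by (simp add: frontier_closed borel_closed)
  ultimately have "frontier A \<in> null_sets lborel"
    using null_sets_completion_iff by blast
  then show ?thesis
    using AE_not_in by blast
qed

lemma abs_indicator_diff_le_inner_cutoff:
  assumes "open U" and "U \<subseteq> A"
  shows "\<bar>indicator B x - indicator A x\<bar>
           \<le> indicator B x * (1 - 2 * inner_cutoff U k x) + (indicator A x :: real)"
proof -
  have "x \<notin> A \<Longrightarrow> inner_cutoff U k x = 0"
    using inner_cutoff_eq_0[OF assms(1)] assms(2) by auto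
  then show ?thesis
    using inner_cutoff_le_1[of U k x] by (auto simp: indicator_def)
qed

lemma integral_indicator_inner_cutoff_tendsto:
  fixes p :: "'a::euclidean_space \<Rightarrow> real"
  assumes p[measurable]: "p \<in> borel_measurable borel" and p_nonneg: "\<And>x. 0 \<le> p x"
    and p_int: "integrable lborel p"
    and A[measurable]: "A \<in> sets borel" and null: "AE x in lborel. x \<notin> frontier A"
  shows "(\<lambda>k. \<integral>x. p x * (indicator A x * (1 - 2 * inner_cutoff (interior A) k x)) \<partial>lborel)
           \<longlonglongrightarrow> - (\<integral>x. p x * indicator A x \<partial>lborel)"
proof -
  let ?U = "interior A"
  have [measurable]: "?U \<in> sets borel"
    by auto
  have u_lim: "(\<lambda>k. 1 - 2 * inner_cutoff ?U k x) \<longlonglongrightarrow> 1 - 2 * indicator ?U x" for x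
  proof (cases "x \<in> ?U")
    case True
    have "(\<lambda>k. 1 - 2 * inner_cutoff ?U k x) \<longlonglongrightarrow> 1 - 2 * 1"
      by (intro tendsto_intros tendsto_inner_cutoff[OF open_interior True])
    then show ?thesis
      using True by simp
  next
    case False
    then show ?thesis
      using inner_cutoff_eq_0[OF open_interior False] by simp
  qed
  have "(\<lambda>k. \<integral>x. p x * (indicator A x * (1 - 2 * inner_cutoff ?U k x)) \<partial>lborel)
          \<longlonglongrightarrow> (\<integral>x. p x * (indicator A x * (1 - 2 * indicator ?U x)) \<partial>lborel)"
  proof (rule integral_dominated_convergence[where w=p])
    show "AE x in lborel. (\<lambda>k. p x * (indicator A x * (1 - 2 * inner_cutoff ?U k x)))
        \<longlonglongrightarrow> p x * (indicator A x * (1 - 2 * indicator ?U x))"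
      by (intro AE_I2 tendsto_mult_left u_lim)
    show "AE x in lborel. norm (p x * (indicator A x * (1 - 2 * inner_cutoff ?U k x))) \<le> p x" for k
    proof (intro AE_I2)
      fix x
      have "\<bar>indicator A x * (1 - 2 * inner_cutoff ?U k x)\<bar> \<le> (1::real)"
        using inner_cutoff_nonneg[of ?U k x] inner_cutoff_le_1[of ?U k x] by (auto simp: indicator_def)
      then show "norm (p x * (indicator A x * (1 - 2 * inner_cutoff ?U k x))) \<le> p x"
        using p_nonneg[of x] by (simp add: abs_mult mult_left_le)
    qed
  qed (use p_int in auto)
  also have "(\<integral>x. p x * (indicator A x * (1 - 2 * indicator ?U x)) \<partial>lborel)
      = (\<integral>x. - (p x * indicator A x) \<partial>lborel)"
  proof (rule integral_cong_AE)
    show "AE x in lborel. p x * (indicator A x * (1 - 2 * indicator ?U x)) = - (p x * indicator A x)"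
      using null
    proof eventually_elim
      fix x assume "x \<notin> frontier A"
      then have "x \<in> A \<Longrightarrow> x \<in> ?U"
        unfolding frontier_def using closure_subset by auto
      then show "p x * (indicator A x * (1 - 2 * indicator ?U x)) = - (p x * indicator A x)"
        by (auto simp: indicator_def)
    qed
  qed auto
  finally show ?thesis
    by simp
qed

text \<open>The weighted \<open>L\<^sup>1\<close> distance of the indicators is dominated by the weakly continuous functional
  \<open>\<integral> p 1\<^sub>A\<^sub>n (1 - 2 inner_cutoff (interior A) k) + \<integral> p 1\<^sub>A\<close>, whose limit in \<open>n\<close> tends to
  \<open>0\<close> as \<open>k \<rightarrow> \<infinity>\<close> because the frontier of \<open>A\<close> is null.\<close>

lemma L1_indicator_tendsto_of_null_frontier:
  fixes p :: "'a::euclidean_space \<Rightarrow> real" and As :: "nat \<Rightarrow> 'a set"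
  assumes p[measurable]: "p \<in> borel_measurable borel" and p_nonneg: "\<And>x. 0 \<le> p x"
    and p_int: "integrable lborel p"
    and [measurable]: "\<And>n. As n \<in> sets borel" "A \<in> sets borel"
    and null: "AE x in lborel. x \<notin> frontier A"
    and conv: "\<And>u. continuous_on UNIV u \<Longrightarrow> (\<And>x. \<bar>u x\<bar> \<le> 1) \<Longrightarrow>
       (\<lambda>n. \<integral>x. p x * (indicator (As n) x * u x) \<partial>lborel) \<longlonglongrightarrow> (\<integral>x. p x * (indicator A x * u x) \<partial>lborel)"
  shows "(\<lambda>n. \<integral>x. p x * \<bar>indicator (As n) x - indicator A x\<bar> \<partial>lborel) \<longlonglongrightarrow> 0"
proof -
  define u where "u k x = 1 - 2 * inner_cutoff (interior A) k x" for k x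
  have u_cont: "continuous_on UNIV (u k)" for k
    unfolding u_def by (intro continuous_intros continuous_on_inner_cutoff)
  have u_bound: "\<bar>u k x\<bar> \<le> 1" for k x
    using inner_cutoff_nonneg[of "interior A" k x] inner_cutoff_le_1[of "interior A" k x] by (auto simp: u_def)
  have [measurable]: "u k \<in> borel_measurable borel" for k
    unfolding u_def by measurable
  have int: "integrable lborel (\<lambda>x. p x * (indicator B x * v x))"
    if [measurable]: "B \<in> sets borel" "v \<in> borel_measurable borel" and "\<And>x. \<bar>v x\<bar> \<le> 1" for B v
    using p_int that(3) by (intro integrable_mult_bounded[where K=1]) (auto simp: indicator_def)
  define pA where "pA = (\<integral>x. p x * indicator A x \<partial>lborel)"
  have int_A: "integrable lborel (\<lambda>x. p x * indicator A x)"
    using int[of A "\<lambda>_. 1"] by simp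
  define y where "y k n = (\<integral>x. p x * (indicator (As n) x * u k x) \<partial>lborel) + pA" for k n
  define c where "c k = (\<integral>x. p x * (indicator A x * u k x) \<partial>lborel) + pA" for k
  show ?thesis
  proof (rule tendsto_zero_by_approximation[where y=y and c=c])
    show "0 \<le> (\<integral>x. p x * \<bar>indicator (As n) x - indicator A x\<bar> \<partial>lborel)" for n
      using p_nonneg by (intro integral_nonneg_AE AE_I2) simp
    show "(\<integral>x. p x * \<bar>indicator (As n) x - indicator A x\<bar> \<partial>lborel) \<le> y k n" for k n
    proof -
      have "(\<integral>x. p x * \<bar>indicator (As n) x - indicator A x\<bar> \<partial>lborel)
          \<le> (\<integral>x. p x * (indicator (As n) x * u k x) + p x * indicator A x \<partial>lborel)"
      proof (rule integral_mono)
        show "integrable lborel (\<lambda>x. p x * \<bar>indicator (As n) x - indicator A x\<bar>)"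
          using p_int by (intro integrable_mult_bounded[where K=1]) (auto simp: indicator_def)
        show "integrable lborel (\<lambda>x. p x * (indicator (As n) x * u k x) + p x * indicator A x)"
          using int[of "As n" "u k"] int_A u_bound by auto
        show "p x * \<bar>indicator (As n) x - indicator A x\<bar> \<le> p x * (indicator (As n) x * u k x) + p x * indicator A x" for x
          using mult_left_mono[OF abs_indicator_diff_le_inner_cutoff[OF open_interior interior_subset] p_nonneg]
          by (simp add: u_def distrib_left)
      qed
      also have "\<dots> = y k n"
        unfolding y_def pA_def using int[of "As n" "u k"] int_A u_bound by simp
      finally show ?thesis .
    qed
    show "(\<lambda>n. y k n) \<longlonglongrightarrow> c k" for k
      unfolding y_def c_def by (intro tendsto_intros conv u_cont u_bound)
    have "c \<longlonglongrightarrow> - pA + pA"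
      unfolding c_def u_def pA_def
      by (intro tendsto_add tendsto_const integral_indicator_inner_cutoff_tendsto p p_nonneg p_int) (simp_all add: null)
    then show "c \<longlonglongrightarrow> 0"
      by simp
  qed
qed

lemma integral_indicator_sublevel_tendsto_0:
  fixes p g :: "'a::euclidean_space \<Rightarrow> real"
  assumes p[measurable]: "p \<in> borel_measurable borel" and p_pos: "\<And>x. 0 < p x"
    and g: "integrable lborel g"
  shows "(\<lambda>k. \<integral>x. g x * indicator {x. p x < 1 / (real k + 1)} x \<partial>lborel) \<longlonglongrightarrow> 0"
proof -
  have [measurable]: "g \<in> borel_measurable borel"
    using borel_measurable_integrable[OF g] by simp
  have "(\<lambda>k. \<integral>x. g x * indicator {x. p x < 1 / (real k + 1)} x \<partial>lborel)
      \<longlonglongrightarrow> (\<integral>x. 0 \<partial>(lborel :: 'a measure))"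
  proof (rule integral_dominated_convergence[where w="\<lambda>x. \<bar>g x\<bar>"])
    show "AE x in lborel. (\<lambda>k. g x * indicator {x. p x < 1 / (real k + 1)} x) \<longlonglongrightarrow> 0"
    proof (intro AE_I2)
      fix x
      obtain N :: nat where N: "1 / p x < real N"
        using reals_Archimedean2 by blast
      have "\<forall>\<^sub>F k in sequentially. \<not> p x < 1 / (real k + 1)"
        unfolding eventually_sequentially
      proof (intro exI allI impI)
        fix k assume "N \<le> k"
        then have "1 / p x < real k + 1" using N by linarith
        then show "\<not> p x < 1 / (real k + 1)" using p_pos[of x] by (simp add: field_simps)
      qed
      then have "\<forall>\<^sub>F k in sequentially. g x * indicator {x. p x < 1 / (real k + 1)} x = 0"
        by eventually_elim simp
      then show "(\<lambda>k. g x * indicator {x. p x < 1 / (real k + 1)} x) \<longlonglongrightarrow> 0"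
        by (rule tendsto_eventually)
    qed
    show "AE x in lborel. norm (g x * indicator {x. p x < 1 / (real k + 1)} x) \<le> \<bar>g x\<bar>" for k
      by (intro AE_I2) (simp add: indicator_def)
  qed (use g in simp_all)
  then show ?thesis
    by simp
qed

lemma weighted_indicator_diff_le:
  fixes p g :: "'a \<Rightarrow> real"
  assumes g: "0 \<le> g x" "g x \<le> K" and p: "0 < p x"
  shows "g x * \<bar>indicator B x - indicator A x\<bar>
           \<le> K * (real k + 1) * (p x * \<bar>indicator B x - indicator A x\<bar>)
             + g x * indicator {x. p x < 1 / (real k + 1)} x"
proof -
  let ?d = "\<bar>indicator B x - indicator A x\<bar> :: real"
  have d: "0 \<le> ?d" "?d \<le> 1"
    by (auto simp: indicator_def)
  have K: "0 \<le> K"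
    using g by linarith
  show ?thesis
  proof (cases "p x < 1 / (real k + 1)")
    case True
    have "g x * ?d \<le> g x"
      using g d by (simp add: mult_left_le)
    moreover have "0 \<le> K * (real k + 1) * (p x * ?d)"
      using K p d by simp
    ultimately show ?thesis
      using True by simp
  next
    case False
    then have "1 \<le> (real k + 1) * p x"
      by (simp add: field_simps)
    then have "K * ?d * 1 \<le> K * ?d * ((real k + 1) * p x)"
      using K d by (intro mult_left_mono) auto
    moreover have "g x * ?d \<le> K * ?d"
      using g d by (intro mult_right_mono) auto
    ultimately show ?thesis
      using False by (simp add: algebra_simps)
  qed
qed

text \<open>Off \<open>{p < 1/(k+1)}\<close> the weight \<open>g\<close> is at most \<open>K (k+1) p\<close>, and the \<open>g\<close>-mass of
  \<open>{p < 1/(k+1)}\<close> vanishes as \<open>k \<rightarrow> \<infinity>\<close> because \<open>p > 0\<close>.\<close>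

lemma L1_indicator_tendsto_transfer:
  fixes p g :: "'a::euclidean_space \<Rightarrow> real" and As :: "nat \<Rightarrow> 'a set"
  assumes p[measurable]: "p \<in> borel_measurable borel" and p_pos: "\<And>x. 0 < p x"
    and p_int: "integrable lborel p"
    and g[measurable]: "g \<in> borel_measurable borel" and g_bound: "\<And>x. 0 \<le> g x \<and> g x \<le> K"
    and g_int: "integrable lborel g"
    and [measurable]: "\<And>n. As n \<in> sets borel" "A \<in> sets borel"
    and lim: "(\<lambda>n. \<integral>x. p x * \<bar>indicator (As n) x - indicator A x\<bar> \<partial>lborel) \<longlonglongrightarrow> 0"
  shows "(\<lambda>n. \<integral>x. g x * \<bar>indicator (As n) x - indicator A x\<bar> \<partial>lborel) \<longlonglongrightarrow> 0"
proof -
  have int_diff: "integrable lborel (\<lambda>x. f x * \<bar>indicator (As n) x - indicator A x\<bar>)"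
    if "integrable lborel f" for f :: "'a \<Rightarrow> real" and n
    using that by (intro integrable_mult_bounded[where K=1]) (auto simp: indicator_def)
  define S where "S k = {x. p x < 1 / (real k + 1)}" for k
  have [measurable]: "S k \<in> sets borel" for k
    unfolding S_def by measurable
  have int_S: "integrable lborel (\<lambda>x. g x * indicator (S k) x)" for k
    using g_int by (simp add: integrable_real_mult_indicator)
  define y where "y k n = K * (real k + 1) * (\<integral>x. p x * \<bar>indicator (As n) x - indicator A x\<bar> \<partial>lborel)
      + (\<integral>x. g x * indicator (S k) x \<partial>lborel)" for k n
  define c where "c k = (\<integral>x. g x * indicator (S k) x \<partial>lborel)" for k
  show ?thesis
  proof (rule tendsto_zero_by_approximation[where y=y and c=c])
    show "0 \<le> (\<integral>x. g x * \<bar>indicator (As n) x - indicator A x\<bar> \<partial>lborel)" for n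
      using g_bound by (intro integral_nonneg_AE AE_I2) simp
    show "(\<integral>x. g x * \<bar>indicator (As n) x - indicator A x\<bar> \<partial>lborel) \<le> y k n" for k n
    proof -
      have "(\<integral>x. g x * \<bar>indicator (As n) x - indicator A x\<bar> \<partial>lborel)
          \<le> (\<integral>x. K * (real k + 1) * (p x * \<bar>indicator (As n) x - indicator A x\<bar>)
                 + g x * indicator (S k) x \<partial>lborel)"
      proof (rule integral_mono)
        show "integrable lborel (\<lambda>x. g x * \<bar>indicator (As n) x - indicator A x\<bar>)"
          using int_diff g_int by simp
        show "integrable lborel (\<lambda>x. K * (real k + 1) * (p x * \<bar>indicator (As n) x - indicator A x\<bar>)
            + g x * indicator (S k) x)"
          using int_diff[OF p_int] int_S by simp
        show "g x * \<bar>indicator (As n) x - indicator A x\<bar>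
            \<le> K * (real k + 1) * (p x * \<bar>indicator (As n) x - indicator A x\<bar>) + g x * indicator (S k) x" for x
          unfolding S_def using g_bound[of x] p_pos[of x] by (intro weighted_indicator_diff_le) auto
      qed
      also have "\<dots> = y k n"
        unfolding y_def using int_diff[OF p_int] int_S by simp
      finally show ?thesis .
    qed
    show "(\<lambda>n. y k n) \<longlonglongrightarrow> c k" for k
    proof -
      have "(\<lambda>n. y k n) \<longlonglongrightarrow> K * (real k + 1) * 0 + c k"
        unfolding y_def c_def by (intro tendsto_intros lim)
      then show ?thesis by simp
    qed
    show "c \<longlonglongrightarrow> 0"
      unfolding c_def S_def by (rule integral_indicator_sublevel_tendsto_0[OF p p_pos g_int])
  qed
qed

lemma L1_mult_indicator_tendsto:
  fixes gs :: "nat \<Rightarrow> 'a \<Rightarrow> real" and As :: "nat \<Rightarrow> 'a set"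
  assumes gs: "\<And>n. integrable M (gs n)" and g: "integrable M g" "\<And>x. 0 \<le> g x"
    and sets: "\<And>n. As n \<in> sets M" "A \<in> sets M"
    and dens: "(\<lambda>n. \<integral>x. \<bar>gs n x - g x\<bar> \<partial>M) \<longlonglongrightarrow> 0"
    and cells: "(\<lambda>n. \<integral>x. g x * \<bar>indicator (As n) x - indicator A x\<bar> \<partial>M) \<longlonglongrightarrow> 0"
  shows "(\<lambda>n. \<integral>x. \<bar>gs n x * indicator (As n) x - g x * indicator A x\<bar> \<partial>M) \<longlonglongrightarrow> 0"
proof (rule Lim_null_comparison)
  have "(\<lambda>n. (\<integral>x. \<bar>gs n x - g x\<bar> \<partial>M) + (\<integral>x. g x * \<bar>indicator (As n) x - indicator A x\<bar> \<partial>M)) \<longlonglongrightarrow> 0 + 0"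
    by (intro tendsto_add dens cells)
  then show "(\<lambda>n. (\<integral>x. \<bar>gs n x - g x\<bar> \<partial>M) + (\<integral>x. g x * \<bar>indicator (As n) x - indicator A x\<bar> \<partial>M)) \<longlonglongrightarrow> 0"
    by simp
  show "\<forall>\<^sub>F n in sequentially. norm (\<integral>x. \<bar>gs n x * indicator (As n) x - g x * indicator A x\<bar> \<partial>M)
      \<le> (\<integral>x. \<bar>gs n x - g x\<bar> \<partial>M) + (\<integral>x. g x * \<bar>indicator (As n) x - indicator A x\<bar> \<partial>M)"
  proof (intro always_eventually allI)
    fix n
    have int_cell: "integrable M (\<lambda>x. g x * \<bar>indicator (As n) x - indicator A x\<bar>)"
      using g sets by (intro integrable_mult_bounded[where K=1]) (auto simp: indicator_def)
    have "(\<integral>x. \<bar>gs n x * indicator (As n) x - g x * indicator A x\<bar> \<partial>M)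
        \<le> (\<integral>x. \<bar>gs n x - g x\<bar> + g x * \<bar>indicator (As n) x - indicator A x\<bar> \<partial>M)"
    proof (rule integral_mono)
      show "integrable M (\<lambda>x. \<bar>gs n x * indicator (As n) x - g x * indicator A x\<bar>)"
        using gs g sets by (intro integrable_abs Bochner_Integration.integrable_diff integrable_real_mult_indicator)
      show "integrable M (\<lambda>x. \<bar>gs n x - g x\<bar> + g x * \<bar>indicator (As n) x - indicator A x\<bar>)"
        using gs g int_cell by auto
      show "\<bar>gs n x * indicator (As n) x - g x * indicator A x\<bar>
          \<le> \<bar>gs n x - g x\<bar> + g x * \<bar>indicator (As n) x - indicator A x\<bar>" for x
        using g(2)[of x] by (auto simp: indicator_def)
    qed
    also have "\<dots> = (\<integral>x. \<bar>gs n x - g x\<bar> \<partial>M) + (\<integral>x. g x * \<bar>indicator (As n) x - indicator A x\<bar> \<partial>M)"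
      using gs g int_cell by simp
    finally show "norm (\<integral>x. \<bar>gs n x * indicator (As n) x - g x * indicator A x\<bar> \<partial>M)
        \<le> (\<integral>x. \<bar>gs n x - g x\<bar> \<partial>M) + (\<integral>x. g x * \<bar>indicator (As n) x - indicator A x\<bar> \<partial>M)"
      by simp
  qed
qed

section \<open>The observation density and the posterior kernel\<close>

lemma nn_integral_eq_1_of_distr_density:
  fixes X :: "'w \<Rightarrow> 'a::euclidean_space"
  assumes "prob_space W" and "X \<in> borel_measurable W"
    and "distr W borel X = density lborel (\<lambda>z. ennreal (d z))" and "d \<in> borel_measurable borel"
  shows "(\<integral>\<^sup>+z. ennreal (d z) \<partial>lborel) = 1"
  using assms prob_space.prob_space_distr[OF assms(1,2)]
  by (intro nn_integral_eq_1_of_prob_space_density) simp_all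

text \<open>The density \<open>\<phi> x\<close> is only known through the law of \<open>F x w\<close>.  Joint measurability comes
  from writing \<open>\<phi> x z\<close> as the limit of the tent averages \<open>E[tent z r (F x w)] / \<integral> tent z r\<close>
  as \<open>r \<rightarrow> 0\<close>, each of which is jointly measurable by Fubini.\<close>

lemma observation_density_measurable:
  fixes F :: "'a::euclidean_space \<Rightarrow> 'w \<Rightarrow> 'a" and \<phi> :: "'a \<Rightarrow> 'a \<Rightarrow> real"
  assumes W: "prob_space W"
    and F_meas: "(\<lambda>(x, w). F x w) \<in> borel_measurable (borel \<Otimes>\<^sub>M W)"
    and F_law: "\<And>x. distr W borel (F x) = density lborel (\<lambda>z. ennreal (\<phi> x z))"
    and phi_nonneg: "\<And>x z. 0 \<le> \<phi> x z" and phi_bdd: "\<And>x z. \<phi> x z \<le> C"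
    and phi_lip: "\<And>x. L-lipschitz_on UNIV (\<phi> x)"
  shows "(\<lambda>(x, z). \<phi> x z) \<in> borel_measurable (borel \<Otimes>\<^sub>M borel)"
proof -
  interpret W: prob_space W by (rule W)
  define J where "J k xz = (\<integral>w. tent (snd xz) (inverse (Suc k)) (F (fst xz) w) \<partial>W)" for k xz
  define I where "I k xz = (\<integral>y. tent (snd xz) (inverse (Suc k)) y \<partial>lborel)" for k and xz :: "'a \<times> 'a"
  have phi_meas: "\<phi> x \<in> borel_measurable borel" for x
    using lipschitz_on_continuous_on[OF phi_lip] borel_measurable_continuous_onI by auto
  have phi_abs: "\<bar>\<phi> x z\<bar> \<le> C" for x z
    using phi_nonneg[of x z] phi_bdd[of x z] by simp
  have J_eq: "J k (x, z) = (\<integral>y. \<phi> x y * tent z (inverse (Suc k)) y \<partial>lborel)" for k x z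
  proof -
    have "F x \<in> borel_measurable W"
      using measurable_Pair2[OF F_meas, of x] by simp
    then have "J k (x, z) = (\<integral>y. tent z (inverse (Suc k)) y \<partial>distr W borel (F x))"
      unfolding J_def by (simp add: integral_distr)
    then show ?thesis
      unfolding F_law using phi_meas phi_nonneg by (simp add: integral_density)
  qed
  have lim: "(\<lambda>k. J k (x, z) / I k (x, z)) \<longlonglongrightarrow> \<phi> x z" for x z
    unfolding J_eq I_def prod.sel by (rule tent_average_tendsto[OF phi_meas phi_abs phi_lip])
  have J_meas: "J k \<in> borel_measurable (borel \<Otimes>\<^sub>M borel)" for k
  proof -
    have "(\<lambda>x. (fst (fst x), snd x)) \<in> measurable ((borel \<Otimes>\<^sub>M borel) \<Otimes>\<^sub>M W) (borel \<Otimes>\<^sub>M W)"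
      by measurable
    from measurable_comp[OF this F_meas]
    have "(\<lambda>(xz, w). F (fst xz) w) \<in> borel_measurable ((borel \<Otimes>\<^sub>M borel) \<Otimes>\<^sub>M W)"
      by (simp add: comp_def case_prod_beta')
    then have "(\<lambda>(xz, w). tent (snd xz) (inverse (Suc k)) (F (fst xz) w)) \<in> borel_measurable ((borel \<Otimes>\<^sub>M borel) \<Otimes>\<^sub>M W)"
      unfolding tent_def by measurable
    from W.borel_measurable_lebesgue_integral[OF this] show ?thesis
      unfolding J_def by simp
  qed
  have I_meas: "I k \<in> borel_measurable (borel \<Otimes>\<^sub>M borel)" for k
  proof -
    have "(\<lambda>(xz, y). tent (snd xz) (inverse (Suc k)) y) \<in> borel_measurable ((borel \<Otimes>\<^sub>M borel) \<Otimes>\<^sub>M lborel)"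
      unfolding tent_def by measurable
    from lborel.borel_measurable_lebesgue_integral[OF this] show ?thesis
      unfolding I_def by simp
  qed
  show ?thesis
    by (rule borel_measurable_LIMSEQ_real[where u="\<lambda>k xz. J k xz / I k xz"])
       (use lim J_meas I_meas in auto)
qed

lemma posterior_kernel_measurable:
  fixes \<phi> :: "'a::euclidean_space \<Rightarrow> 'a \<Rightarrow> real" and g :: "'a \<Rightarrow> real"
  assumes [measurable]: "(\<lambda>(x, z). \<phi> x z) \<in> borel_measurable (borel \<Otimes>\<^sub>M borel)"
    "g \<in> borel_measurable borel" "B \<in> sets borel"
  shows "(\<lambda>z. \<integral>x. g x * indicator B x * \<phi> x z \<partial>lborel) \<in> borel_measurable borel"
proof -
  have "(\<lambda>(z, x). g x * indicator B x * \<phi> x z) \<in> borel_measurable (borel \<Otimes>\<^sub>M lborel)"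
    by measurable
  from lborel.borel_measurable_lebesgue_integral[OF this] show ?thesis
    by simp
qed

lemma posterior_kernel_nonneg:
  fixes \<phi> :: "'a::euclidean_space \<Rightarrow> 'a \<Rightarrow> real" and g :: "'a \<Rightarrow> real"
  assumes "\<And>x z. 0 \<le> \<phi> x z" and "\<And>x. 0 \<le> g x"
  shows "0 \<le> (\<integral>x. g x * indicator B x * \<phi> x z \<partial>lborel)"
  using assms by (intro integral_nonneg_AE AE_I2) simp

lemma nn_integral_posterior_kernel:
  fixes \<phi> :: "'a::euclidean_space \<Rightarrow> 'a \<Rightarrow> real" and g :: "'a \<Rightarrow> real"
  assumes phi[measurable]: "(\<lambda>(x, z). \<phi> x z) \<in> borel_measurable (borel \<Otimes>\<^sub>M borel)"
    and phi_nonneg: "\<And>x z. 0 \<le> \<phi> x z" and phi_bdd: "\<And>x z. \<phi> x z \<le> C"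
    and phi_mass: "\<And>x. (\<integral>\<^sup>+z. ennreal (\<phi> x z) \<partial>lborel) = 1"
    and g[measurable]: "g \<in> borel_measurable borel" and g_nonneg: "\<And>x. 0 \<le> g x"
    and g_int: "integrable lborel g"
    and B[measurable]: "B \<in> sets borel"
  shows "(\<integral>\<^sup>+z. ennreal (\<integral>x. g x * indicator B x * \<phi> x z \<partial>lborel) \<partial>lborel)
           = ennreal (\<integral>x. g x * indicator B x \<partial>lborel)"
proof -
  have gB_int: "integrable lborel (\<lambda>x. g x * indicator B x)"
    using g_int by (simp add: integrable_real_mult_indicator)
  have int: "integrable lborel (\<lambda>x. g x * indicator B x * \<phi> x z)" for z
  proof (rule integrable_mult_bounded[OF gB_int, where K=C])
    show "(\<lambda>x. \<phi> x z) \<in> borel_measurable lborel"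
      by measurable
    show "\<bar>\<phi> x z\<bar> \<le> C" for x
      using phi_nonneg[of x z] phi_bdd[of x z] by simp
  qed
  have nonneg: "0 \<le> g x * indicator B x * \<phi> x z" for x z
    using g_nonneg[of x] phi_nonneg[of x z] by simp
  have "(\<integral>\<^sup>+z. ennreal (\<integral>x. g x * indicator B x * \<phi> x z \<partial>lborel) \<partial>lborel)
      = (\<integral>\<^sup>+z. (\<integral>\<^sup>+x. ennreal (g x * indicator B x * \<phi> x z) \<partial>lborel) \<partial>lborel)"
    using int nonneg by (intro nn_integral_cong) (simp add: nn_integral_eq_integral)
  also have "\<dots> = (\<integral>\<^sup>+x. (\<integral>\<^sup>+z. ennreal (g x * indicator B x * \<phi> x z) \<partial>lborel) \<partial>lborel)"
    by (rule lborel_pair.Fubini') measurable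
  also have "\<dots> = (\<integral>\<^sup>+x. ennreal (g x * indicator B x) \<partial>lborel)"
  proof (intro nn_integral_cong)
    fix x
    have "(\<integral>\<^sup>+z. ennreal (g x * indicator B x * \<phi> x z) \<partial>lborel)
        = (\<integral>\<^sup>+z. ennreal (g x * indicator B x) * ennreal (\<phi> x z) \<partial>lborel)"
      using g_nonneg[of x] phi_nonneg by (intro nn_integral_cong) (simp add: ennreal_mult)
    also have "\<dots> = ennreal (g x * indicator B x) * (\<integral>\<^sup>+z. ennreal (\<phi> x z) \<partial>lborel)"
      by (intro nn_integral_cmult) measurable
    finally show "(\<integral>\<^sup>+z. ennreal (g x * indicator B x * \<phi> x z) \<partial>lborel) = ennreal (g x * indicator B x)"
      using phi_mass by simp
  qed
  also have "\<dots> = ennreal (\<integral>x. g x * indicator B x \<partial>lborel)"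
    using gB_int g_nonneg by (intro nn_integral_eq_integral) auto
  finally show ?thesis .
qed

section \<open>Convergence of a single term\<close>

definition Pf_term ::
  "('a::euclidean_space measure \<Rightarrow> real) \<Rightarrow> ('a \<Rightarrow> 'a \<Rightarrow> real) \<Rightarrow> nat \<Rightarrow> 'a measure \<Rightarrow> ('a \<Rightarrow> nat) \<Rightarrow> real" where
  "Pf_term f \<phi> m \<pi> Q =
     (if measure \<pi> (Q -` {m}) = 0 then 0 else f (belief_update \<phi> m \<pi> Q) * measure \<pi> (Q -` {m}))"

lemma Pf_eq_sum_Pf_term: "Pf f \<phi> M \<pi> Q = (\<Sum>m\<in>{1..M}. Pf_term f \<phi> m \<pi> Q)"
  by (simp add: Pf_def Pf_term_def)

lemma Pf_term_density:
  fixes d :: "'a::euclidean_space \<Rightarrow> real" and R :: "'a \<Rightarrow> nat"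
  assumes d: "d \<in> borel_measurable borel" "\<And>x. 0 \<le> d x" "integrable lborel d"
    and R: "R \<in> borel_measurable borel"
    and phi: "(\<lambda>(x, z). \<phi> x z) \<in> borel_measurable (borel \<Otimes>\<^sub>M borel)"
  shows "Pf_term f \<phi> m (density lborel (\<lambda>x. ennreal (d x))) R =
    (let a = \<integral>x. d x * indicator (R -` {m}) x \<partial>lborel in
     if a = 0 then 0
     else f (density lborel (\<lambda>z. ennreal (inverse a * (\<integral>x. d x * indicator (R -` {m}) x * \<phi> x z \<partial>lborel)))) * a)"
proof -
  have B: "R -` {m} \<in> sets borel"
    using borel_measurable_vimage[OF R, of m] by simp
  have [measurable]: "(\<lambda>x. \<phi> x z) \<in> borel_measurable borel" for z
    using phi by measurable
  have "(\<integral>x\<in>R -` {m}. \<phi> x z \<partial>density lborel (\<lambda>x. ennreal (d x)))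
      = (\<integral>x. d x * indicator (R -` {m}) x * \<phi> x z \<partial>lborel)" for z
    unfolding set_lebesgue_integral_def using d B by (simp add: integral_density mult.assoc)
  then show ?thesis
    unfolding Pf_term_def belief_update_def measure_density_eq_integral[OF d B] Let_def by simp
qed

lemma weighted_tendsto_0_of_bounded:
  fixes a :: "nat \<Rightarrow> real" and \<mu> :: "nat \<Rightarrow> 'a::topological_space measure"
  assumes a: "a \<longlonglongrightarrow> 0" "\<And>n. 0 \<le> a n" and \<mu>: "\<And>n. 0 < a n \<Longrightarrow> prob_borel (\<mu> n)"
    and f_bdd: "\<exists>B. \<forall>\<mu>. prob_borel \<mu> \<longrightarrow> \<bar>f \<mu>\<bar> \<le> B"
  shows "(\<lambda>n. if a n = 0 then 0 else f (\<mu> n) * a n) \<longlonglongrightarrow> 0"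
proof -
  obtain B where B: "\<And>\<mu>. prob_borel \<mu> \<Longrightarrow> \<bar>f \<mu>\<bar> \<le> B"
    using f_bdd by blast
  have bound: "norm (if a n = 0 then 0 else f (\<mu> n) * a n) \<le> \<bar>B\<bar> * a n" for n
  proof (cases "a n = 0")
    case False
    then have pos: "0 < a n"
      using a(2)[of n] by linarith
    then have "\<bar>f (\<mu> n)\<bar> \<le> \<bar>B\<bar>"
      using B[OF \<mu>[OF pos]] by linarith
    then show ?thesis
      using False pos by (simp add: abs_mult mult_right_mono)
  qed simp
  show ?thesis
  proof (rule Lim_null_comparison)
    show "\<forall>\<^sub>F n in sequentially. norm (if a n = 0 then 0 else f (\<mu> n) * a n) \<le> \<bar>B\<bar> * a n"
      using bound by simp
    show "(\<lambda>n. \<bar>B\<bar> * a n) \<longlonglongrightarrow> 0"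
      using tendsto_mult_left[OF a(1), of "\<bar>B\<bar>"] by simp
  qed
qed

lemma weighted_normalized_density_tendsto:
  fixes a :: "nat \<Rightarrow> real" and k :: "nat \<Rightarrow> 'a::euclidean_space \<Rightarrow> real"
    and f :: "'a measure \<Rightarrow> real"
  assumes a: "a \<longlonglongrightarrow> a0" "\<And>n. 0 \<le> a n"
    and k: "\<And>z. (\<lambda>n. k n z) \<longlonglongrightarrow> k0 z" "\<And>n. k n \<in> borel_measurable borel"
      "k0 \<in> borel_measurable borel" "\<And>n z. 0 \<le> k n z"
    and mass: "\<And>n. 0 < a n \<Longrightarrow> (\<integral>\<^sup>+z. ennreal (inverse (a n) * k n z) \<partial>lborel) = 1"
      "0 < a0 \<Longrightarrow> (\<integral>\<^sup>+z. ennreal (inverse a0 * k0 z) \<partial>lborel) = 1"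
    and f_bdd: "\<exists>B. \<forall>\<mu>. prob_borel \<mu> \<longrightarrow> \<bar>f \<mu>\<bar> \<le> B"
    and f_cont: "\<And>\<mu>s \<mu>. (\<forall>n. prob_borel (\<mu>s n)) \<Longrightarrow> prob_borel \<mu> \<Longrightarrow>
                   weak_conv_seq \<mu>s \<mu> \<Longrightarrow> (\<lambda>n. f (\<mu>s n)) \<longlonglongrightarrow> f \<mu>"
  shows "(\<lambda>n. if a n = 0 then 0 else f (density lborel (\<lambda>z. ennreal (inverse (a n) * k n z))) * a n)
     \<longlonglongrightarrow> (if a0 = 0 then 0 else f (density lborel (\<lambda>z. ennreal (inverse a0 * k0 z))) * a0)"
proof (cases "a0 = 0")
  case True
  have "prob_borel (density lborel (\<lambda>z. ennreal (inverse (a n) * k n z)))" if "0 < a n" for n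
    using mass(1)[OF that] k(2)[of n] by (intro prob_borel_density_of_nn_integral_eq_1) auto
  moreover have "a \<longlonglongrightarrow> 0"
    using a(1) True by simp
  ultimately show ?thesis
    using True weighted_tendsto_0_of_bounded[OF _ a(2) _ f_bdd] by simp
next
  case False
  have a0: "0 < a0"
    using False LIMSEQ_le_const[OF a(1)] a(2) by force
  have eventually_pos: "\<forall>\<^sub>F n in sequentially. 0 < a n"
    using order_tendstoD(1)[OF a(1) a0] .
  \<comment> \<open>For the finitely many \<open>n\<close> with \<open>a n = 0\<close> the normalised kernel is not a probability
    density; there \<open>e n\<close> falls back to the limit density.\<close>
  define e where "e n z = (if 0 < a n then inverse (a n) * k n z else inverse a0 * k0 z)" for n z
  define e0 where "e0 z = inverse a0 * k0 z" for z
  have k0_nonneg: "0 \<le> k0 z" for z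
    using LIMSEQ_le_const[OF k(1)] k(4) by blast
  have e: "e n \<in> borel_measurable borel" "0 \<le> e n z" "(\<integral>\<^sup>+z. ennreal (e n z) \<partial>lborel) = 1" for n z
    unfolding e_def using k(2,3,4) k0_nonneg a(2) a0 mass(1) mass(2)[OF a0] by (cases "0 < a n"; simp)+
  have e0: "e0 \<in> borel_measurable borel" "0 \<le> e0 z" "(\<integral>\<^sup>+z. ennreal (e0 z) \<partial>lborel) = 1" for z
    unfolding e0_def using k(3) k0_nonneg a0 mass(2)[OF a0] by simp_all
  have e_lim: "(\<lambda>n. e n z) \<longlonglongrightarrow> e0 z" for z
  proof -
    have "(\<lambda>n. inverse (a n) * k n z) \<longlonglongrightarrow> inverse a0 * k0 z"
      using False by (intro tendsto_intros a(1) k(1))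
    moreover have "\<forall>\<^sub>F n in sequentially. inverse (a n) * k n z = e n z"
      using eventually_pos by eventually_elim (simp add: e_def)
    ultimately show ?thesis
      unfolding e0_def by (rule Lim_transform_eventually)
  qed
  have "(\<lambda>n. f (density lborel (\<lambda>z. ennreal (e n z)))) \<longlonglongrightarrow> f (density lborel (\<lambda>z. ennreal (e0 z)))"
    by (rule f_cont[OF _ _ weak_conv_seq_density_of_pointwise[OF e(1,2,3) e0(1,2,3) e_lim]])
       (use e e0 prob_borel_density_of_nn_integral_eq_1 in blast)+
  then have "(\<lambda>n. f (density lborel (\<lambda>z. ennreal (e n z))) * a n) \<longlonglongrightarrow> f (density lborel (\<lambda>z. ennreal (e0 z))) * a0"
    by (intro tendsto_mult a(1))
  moreover have "\<forall>\<^sub>F n in sequentially. f (density lborel (\<lambda>z. ennreal (e n z))) * a n =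
      (if a n = 0 then 0 else f (density lborel (\<lambda>z. ennreal (inverse (a n) * k n z))) * a n)"
    using eventually_pos by eventually_elim (simp add: e_def)
  ultimately show ?thesis
    using False unfolding e0_def by (auto elim: Lim_transform_eventually)
qed

lemma Pf_term_density_tendsto:
  fixes gs :: "nat \<Rightarrow> 'a::euclidean_space \<Rightarrow> real" and Rs :: "nat \<Rightarrow> 'a \<Rightarrow> nat"
  assumes phi: "(\<lambda>(x, z). \<phi> x z) \<in> borel_measurable (borel \<Otimes>\<^sub>M borel)"
      "\<And>x z. 0 \<le> \<phi> x z" "\<And>x z. \<phi> x z \<le> C" "\<And>x. (\<integral>\<^sup>+z. ennreal (\<phi> x z) \<partial>lborel) = 1"
    and f_bdd: "\<exists>B. \<forall>\<mu>. prob_borel \<mu> \<longrightarrow> \<bar>f \<mu>\<bar> \<le> B"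
    and f_cont: "\<And>\<mu>s \<mu>. (\<forall>n. prob_borel (\<mu>s n)) \<Longrightarrow> prob_borel \<mu> \<Longrightarrow>
                   weak_conv_seq \<mu>s \<mu> \<Longrightarrow> (\<lambda>n. f (\<mu>s n)) \<longlonglongrightarrow> f \<mu>"
    and gs: "\<And>n. gs n \<in> borel_measurable borel" "\<And>n x. 0 \<le> gs n x" "\<And>n. integrable lborel (gs n)"
    and g: "g \<in> borel_measurable borel" "\<And>x. 0 \<le> g x" "integrable lborel g"
    and dens: "(\<lambda>n. \<integral>x. \<bar>gs n x - g x\<bar> \<partial>lborel) \<longlonglongrightarrow> 0"
    and R: "\<And>n. Rs n \<in> borel_measurable borel" "R \<in> borel_measurable borel"
    and cells: "(\<lambda>n. \<integral>x. g x * \<bar>indicator (Rs n -` {m}) x - indicator (R -` {m}) x\<bar> \<partial>lborel) \<longlonglongrightarrow> 0"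
  shows "(\<lambda>n. Pf_term f \<phi> m (density lborel (\<lambda>x. ennreal (gs n x))) (Rs n))
           \<longlonglongrightarrow> Pf_term f \<phi> m (density lborel (\<lambda>x. ennreal (g x))) R"
proof -
  define As where "As n = Rs n -` {m}" for n
  define A where "A = R -` {m}"
  have cell_sets[measurable]: "As n \<in> sets borel" "A \<in> sets borel" for n
    unfolding As_def A_def using borel_measurable_vimage[OF R(1)] borel_measurable_vimage[OF R(2)] by simp_all
  have restrict: "(\<lambda>n. \<integral>x. \<bar>gs n x * indicator (As n) x - g x * indicator A x\<bar> \<partial>lborel) \<longlonglongrightarrow> 0"
    using gs g dens cells cell_sets unfolding As_def A_def by (intro L1_mult_indicator_tendsto) auto
  have restrict_int: "integrable lborel (\<lambda>x. gs n x * indicator (As n) x)"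
      "integrable lborel (\<lambda>x. g x * indicator A x)" for n
    using gs g by (simp_all add: integrable_real_mult_indicator)
  define a where "a n = (\<integral>x. gs n x * indicator (As n) x \<partial>lborel)" for n
  define a0 where "a0 = (\<integral>x. g x * indicator A x \<partial>lborel)"
  define k where "k n z = (\<integral>x. gs n x * indicator (As n) x * \<phi> x z \<partial>lborel)" for n z
  define k0 where "k0 z = (\<integral>x. g x * indicator A x * \<phi> x z \<partial>lborel)" for z
  have "(\<lambda>n. \<integral>x. gs n x * indicator (As n) x * 1 \<partial>lborel) \<longlonglongrightarrow> (\<integral>x. g x * indicator A x * 1 \<partial>lborel)"
    using restrict_int by (intro integral_mult_bounded_tendsto_of_L1[OF _ _ _ _ restrict, where K=1]) auto
  then have a_lim: "a \<longlonglongrightarrow> a0"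
    unfolding a_def a0_def by simp
  have k_lim: "(\<lambda>n. k n z) \<longlonglongrightarrow> k0 z" for z
    unfolding k_def k0_def using restrict_int phi(1,2,3)
    by (intro integral_mult_bounded_tendsto_of_L1[OF _ _ _ _ restrict, where K=C]) auto
  have k_meas: "k n \<in> borel_measurable borel" "k0 \<in> borel_measurable borel" for n
    unfolding k_def k0_def using phi(1) gs(1) g(1) by (simp_all add: posterior_kernel_measurable)
  have k_nonneg: "0 \<le> k n z" "0 \<le> k0 z" for n z
    unfolding k_def k0_def using phi(2) gs(2) g(2) by (simp_all add: posterior_kernel_nonneg)
  have "(\<integral>\<^sup>+z. ennreal (k n z) \<partial>lborel) = ennreal (a n)" "(\<integral>\<^sup>+z. ennreal (k0 z) \<partial>lborel) = ennreal a0" for n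
    unfolding k_def k0_def a_def a0_def
    by (rule nn_integral_posterior_kernel[OF phi gs(1,2,3) cell_sets(1)],
        rule nn_integral_posterior_kernel[OF phi g cell_sets(2)])
  note total = this
  have mass: "(\<integral>\<^sup>+z. ennreal (inverse (a n) * k n z) \<partial>lborel) = 1" if "0 < a n" for n
    using k_meas(1)[of n] k_nonneg(1) total(1)[of n] that by (intro nn_integral_normalized_eq_1) simp_all
  have mass0: "(\<integral>\<^sup>+z. ennreal (inverse a0 * k0 z) \<partial>lborel) = 1" if "0 < a0"
    using k_meas(2) k_nonneg(2) total(2) that by (intro nn_integral_normalized_eq_1) simp_all
  have "0 \<le> a n" for n
    unfolding a_def using gs(2) by (intro integral_nonneg_AE AE_I2) simp
  then have "(\<lambda>n. if a n = 0 then 0 else f (density lborel (\<lambda>z. ennreal (inverse (a n) * k n z))) * a n)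
     \<longlonglongrightarrow> (if a0 = 0 then 0 else f (density lborel (\<lambda>z. ennreal (inverse a0 * k0 z))) * a0)"
    by (rule weighted_normalized_density_tendsto[OF a_lim _ k_lim k_meas k_nonneg(1) mass mass0 f_bdd f_cont])
  then show ?thesis
    using Pf_term_density[OF gs(1,2,3) R(1) phi(1)] Pf_term_density[OF g R(2) phi(1)]
    unfolding a_def a0_def k_def k0_def As_def A_def Let_def by simp
qed

section \<open>Beliefs in S and quantizers in Q_c\<close>

lemma in_S_weak_conv_imp_L1:
  assumes \<pi>s: "\<And>n. in_S C C1 (\<pi>s n)" and \<pi>: "in_S C C1 \<pi>" and conv: "weak_conv_seq \<pi>s \<pi>"
  obtains gs g where "\<pi>s = (\<lambda>n. density lborel (\<lambda>x. ennreal (gs n x)))"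
    and "\<pi> = density lborel (\<lambda>x. ennreal (g x))"
    and "\<And>n. gs n \<in> borel_measurable borel" "\<And>n x. 0 \<le> gs n x" "\<And>n. integrable lborel (gs n)"
    and "g \<in> borel_measurable borel" "\<And>x. 0 \<le> g x \<and> g x \<le> C" "integrable lborel g"
    and "(\<lambda>n. \<integral>x. \<bar>gs n x - g x\<bar> \<partial>lborel) \<longlonglongrightarrow> 0"
proof -
  obtain g where g: "g \<in> borel_measurable borel" "\<And>x. 0 \<le> g x \<and> g x \<le> C" "C1-lipschitz_on UNIV g"
    and \<pi>_eq: "\<pi> = density lborel (\<lambda>x. ennreal (g x))"
    using \<pi> unfolding in_S_def by blast
  obtain gs where gs: "\<And>n. gs n \<in> borel_measurable borel" "\<And>n x. 0 \<le> gs n x \<and> gs n x \<le> C"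
      "\<And>n. C1-lipschitz_on UNIV (gs n)"
    and \<pi>s_eq: "\<pi>s = (\<lambda>n. density lborel (\<lambda>x. ennreal (gs n x)))"
    using \<pi>s unfolding in_S_def by metis
  have "prob_space (density lborel (\<lambda>x. ennreal (gs n x)))" for n
    using \<pi>s[of n] unfolding in_S_def \<pi>s_eq by blast
  then have gs_int: "integrable lborel (gs n)" "integral\<^sup>L lborel (gs n) = 1" for n
    using gs by (intro integrable_of_prob_space_density; blast)+
  have "prob_space (density lborel (\<lambda>x. ennreal (g x)))"
    using \<pi> unfolding in_S_def \<pi>_eq by blast
  then have g_int: "integrable lborel g" "integral\<^sup>L lborel g = 1"
    using g by (intro integrable_of_prob_space_density; blast)+
  have "(\<lambda>n. gs n z) \<longlonglongrightarrow> g z" for z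
    using conv gs g unfolding \<pi>s_eq \<pi>_eq by (intro weak_conv_lipschitz_densities_imp_pointwise) auto
  then have "(\<lambda>n. \<integral>x. \<bar>gs n x - g x\<bar> \<partial>lborel) \<longlonglongrightarrow> 0"
    using gs gs_int g g_int by (intro L1_tendsto_of_pointwise_tendsto_densities) auto
  then show ?thesis
    using that \<pi>s_eq \<pi>_eq gs gs_int g g_int by blast
qed

lemma continuous_on_mult_indicator_snd:
  fixes u :: "'a::topological_space \<Rightarrow> real"
  assumes "continuous_on UNIV u"
  shows "continuous_on UNIV (\<lambda>z::'a \<times> nat. u (fst z) * indicator {m} (snd z))"
proof -
  have "continuous_on UNIV (\<lambda>z::'a \<times> nat. indicator {m} (snd z) :: real)"
    using continuous_on_compose2[OF Topological_Spaces.continuous_on_discrete continuous_on_snd[OF continuous_on_id]]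
    by blast
  moreover have "continuous_on UNIV (\<lambda>z::'a \<times> nat. u (fst z))"
    using continuous_on_compose2[OF assms continuous_on_fst[OF continuous_on_id]] by blast
  ultimately show ?thesis
    by (intro continuous_on_mult)
qed

lemma integral_joint_PQ_cell:
  fixes p :: "'a::euclidean_space \<Rightarrow> real" and R :: "'a \<Rightarrow> nat" and u :: "'a \<Rightarrow> real"
  assumes p: "p \<in> borel_measurable borel" "\<And>x. 0 \<le> p x"
    and R: "R \<in> borel_measurable borel" and u: "continuous_on UNIV u"
  shows "(\<integral>z. u (fst z) * indicator {m} (snd z) \<partial>joint_PQ (density lborel (\<lambda>x. ennreal (p x))) R)
       = (\<integral>x. p x * (indicator (R -` {m}) x * u x) \<partial>lborel)"
proof -
  have [measurable]: "u \<in> borel_measurable borel"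
    using u borel_measurable_continuous_onI by blast
  have "(\<lambda>x. (x, R x)) \<in> measurable borel (borel \<Otimes>\<^sub>M (borel :: nat measure))"
    by (rule measurable_Pair[OF measurable_ident_sets[OF refl] R])
  then have graph: "(\<lambda>x. (x, R x)) \<in> measurable (density lborel (\<lambda>x. ennreal (p x))) (borel :: ('a \<times> nat) measure)"
    unfolding borel_prod by (simp cong: measurable_cong_sets)
  have test: "(\<lambda>z::'a \<times> nat. u (fst z) * indicator {m} (snd z)) \<in> borel_measurable borel"
    using continuous_on_mult_indicator_snd[OF u] borel_measurable_continuous_onI by blast
  have "(\<lambda>x. u x * indicator {m} (R x)) \<in> borel_measurable lborel"
    using R by (intro borel_measurable_times) (auto intro: measurable_compose[OF R])
  then have "(\<integral>z. u (fst z) * indicator {m} (snd z) \<partial>joint_PQ (density lborel (\<lambda>x. ennreal (p x))) R)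
      = (\<integral>x. p x * (u x * indicator {m} (R x)) \<partial>lborel)"
    unfolding joint_PQ_def using p by (simp add: integral_distr[OF graph test] integral_density)
  also have "\<dots> = (\<integral>x. p x * (indicator (R -` {m}) x * u x) \<partial>lborel)"
    by (intro Bochner_Integration.integral_cong) (auto simp: indicator_def)
  finally show ?thesis .
qed

lemma in_Qc_cells_L1_tendsto:
  fixes p g :: "'a::euclidean_space \<Rightarrow> real"
  assumes p: "p \<in> borel_measurable borel" "\<And>x. 0 < p x"
    and P: "prob_space (density lborel (\<lambda>x. ennreal (p x)))"
    and Qs: "\<And>n. in_Qc M (Qs n)" and Q: "in_Qc M Q"
    and conv: "weak_conv_seq (\<lambda>n. joint_PQ (density lborel (\<lambda>x. ennreal (p x))) (Qs n))
                 (joint_PQ (density lborel (\<lambda>x. ennreal (p x))) Q)"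
    and g: "g \<in> borel_measurable borel" "\<And>x. 0 \<le> g x \<and> g x \<le> K" "integrable lborel g"
  shows "(\<lambda>n. \<integral>x. g x * \<bar>indicator (Qs n -` {m}) x - indicator (Q -` {m}) x\<bar> \<partial>lborel) \<longlonglongrightarrow> 0"
proof -
  have Qs_meas: "Qs n \<in> borel_measurable borel" for n
    using Qs unfolding in_Qc_def by blast
  have Q_meas: "Q \<in> borel_measurable borel" and Q_convex: "convex (Q -` {m})"
    using Q unfolding in_Qc_def by blast+
  have p_nonneg: "0 \<le> p x" for x
    using p(2)[of x] by simp
  have p_int: "integrable lborel p"
    by (rule integrable_of_prob_space_density[OF p(1) p_nonneg P])
  have sets: "Qs n -` {m} \<in> sets borel" "Q -` {m} \<in> sets borel" for n
    using borel_measurable_vimage[OF Qs_meas, of n m] borel_measurable_vimage[OF Q_meas, of m] by simp_all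
  have test_conv: "(\<lambda>n. \<integral>x. p x * (indicator (Qs n -` {m}) x * u x) \<partial>lborel)
      \<longlonglongrightarrow> (\<integral>x. p x * (indicator (Q -` {m}) x * u x) \<partial>lborel)"
    if u: "continuous_on UNIV u" "\<And>x. \<bar>u x\<bar> \<le> 1" for u
  proof -
    have "bounded (range (\<lambda>z::'a \<times> nat. u (fst z) * indicator {m} (snd z)))"
      unfolding bounded_real using u(2) by (intro exI[of _ 1]) (auto simp: indicator_def abs_mult)
    then have "(\<lambda>n. \<integral>z. u (fst z) * indicator {m} (snd z) \<partial>joint_PQ (density lborel (\<lambda>x. ennreal (p x))) (Qs n))
         \<longlonglongrightarrow> (\<integral>z. u (fst z) * indicator {m} (snd z) \<partial>joint_PQ (density lborel (\<lambda>x. ennreal (p x))) Q)"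
      using conv continuous_on_mult_indicator_snd[OF u(1)] unfolding weak_conv_seq_def by blast
    then show ?thesis
      unfolding integral_joint_PQ_cell[OF p(1) p_nonneg Qs_meas u(1)]
        integral_joint_PQ_cell[OF p(1) p_nonneg Q_meas u(1)] .
  qed
  have "(\<lambda>n. \<integral>x. p x * \<bar>indicator (Qs n -` {m}) x - indicator (Q -` {m}) x\<bar> \<partial>lborel) \<longlonglongrightarrow> 0"
    by (rule L1_indicator_tendsto_of_null_frontier[OF p(1) p_nonneg p_int sets
          AE_not_in_frontier_convex[OF Q_convex] test_conv])
  then show ?thesis
    by (rule L1_indicator_tendsto_transfer[OF p p_int g sets])
qed

theorem lemma11:
  fixes F :: "'a::euclidean_space \<Rightarrow> 'w \<Rightarrow> 'a"
    and W :: "'w measure"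
    and \<phi> :: "'a \<Rightarrow> 'a \<Rightarrow> real"
    and C C1 :: real
    and M :: nat
    and p :: "'a \<Rightarrow> real"
    and f :: "'a measure \<Rightarrow> real"
    and \<pi>s :: "nat \<Rightarrow> 'a measure" and \<pi> :: "'a measure"
    and Qs :: "nat \<Rightarrow> 'a \<Rightarrow> nat" and Q :: "'a \<Rightarrow> nat"
  assumes W: "prob_space W"
    and F_meas: "(\<lambda>(x, w). F x w) \<in> borel_measurable (borel \<Otimes>\<^sub>M W)"
    and F_law: "\<And>x. distr W borel (F x) = density lborel (\<lambda>z. ennreal (\<phi> x z))"
    and phi_pos: "\<And>x z. \<phi> x z > 0"
    and phi_bdd: "\<And>x z. \<phi> x z \<le> C"
    and phi_lip: "\<And>x. C1-lipschitz_on UNIV (\<phi> x)"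
    and M_pos: "M \<ge> 1"
    and p_meas: "p \<in> borel_measurable borel"
    and p_pos: "\<And>x. p x > 0"
    and P_prob: "prob_space (density lborel (\<lambda>x. ennreal (p x)))"
    and f_bdd: "\<exists>B. \<forall>\<mu>. prob_borel \<mu> \<longrightarrow> \<bar>f \<mu>\<bar> \<le> B"
    and f_cont: "\<And>\<mu>s \<mu>. (\<forall>n. prob_borel (\<mu>s n)) \<Longrightarrow> prob_borel \<mu> \<Longrightarrow>
                   weak_conv_seq \<mu>s \<mu> \<Longrightarrow> (\<lambda>n. f (\<mu>s n)) \<longlonglongrightarrow> f \<mu>"
    and \<pi>s_S: "\<And>n. in_S C C1 (\<pi>s n)" and \<pi>_S: "in_S C C1 \<pi>"
    and Qs_Qc: "\<And>n. in_Qc M (Qs n)" and Q_Qc: "in_Qc M Q"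
    and \<pi>_conv: "weak_conv_seq \<pi>s \<pi>"
    and Q_conv: "weak_conv_seq (\<lambda>n. joint_PQ (density lborel (\<lambda>x. ennreal (p x))) (Qs n))
                              (joint_PQ (density lborel (\<lambda>x. ennreal (p x))) Q)"
  shows "(\<lambda>n. Pf f \<phi> M (\<pi>s n) (Qs n)) \<longlonglongrightarrow> Pf f \<phi> M \<pi> Q"
proof -
  obtain gs g where \<pi>s_eq: "\<pi>s = (\<lambda>n. density lborel (\<lambda>x. ennreal (gs n x)))"
    and \<pi>_eq: "\<pi> = density lborel (\<lambda>x. ennreal (g x))"
    and gs: "\<And>n. gs n \<in> borel_measurable borel" "\<And>n x. 0 \<le> gs n x" "\<And>n. integrable lborel (gs n)"
    and g: "g \<in> borel_measurable borel" "\<And>x. 0 \<le> g x \<and> g x \<le> C" "integrable lborel g"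
    and dens: "(\<lambda>n. \<integral>x. \<bar>gs n x - g x\<bar> \<partial>lborel) \<longlonglongrightarrow> 0"
    using in_S_weak_conv_imp_L1[OF \<pi>s_S \<pi>_S \<pi>_conv] by blast
  have phi_nonneg: "\<And>x z. 0 \<le> \<phi> x z"
    using phi_pos less_imp_le by blast
  have phi_meas: "(\<lambda>(x, z). \<phi> x z) \<in> borel_measurable (borel \<Otimes>\<^sub>M borel)"
    by (rule observation_density_measurable[OF W F_meas F_law phi_nonneg phi_bdd phi_lip])
  have phi_mass: "(\<integral>\<^sup>+z. ennreal (\<phi> x z) \<partial>lborel) = 1" for x
    using W measurable_Pair2[OF F_meas, of x] F_law lipschitz_on_continuous_on[OF phi_lip]
    by (intro nn_integral_eq_1_of_distr_density) (auto intro: borel_measurable_continuous_onI)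
  have Q_meas: "\<And>n. Qs n \<in> borel_measurable borel" "Q \<in> borel_measurable borel"
    using Qs_Qc Q_Qc unfolding in_Qc_def by blast+
  show ?thesis
    unfolding Pf_eq_sum_Pf_term \<pi>s_eq \<pi>_eq
    by (intro tendsto_sum Pf_term_density_tendsto[OF phi_meas phi_nonneg phi_bdd phi_mass f_bdd f_cont
          gs g(1) _ g(3) dens Q_meas in_Qc_cells_L1_tendsto[OF p_meas p_pos P_prob Qs_Qc Q_Qc Q_conv g]])
       (use g(2) in simp_all)
qed

end
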